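(* Let $X_1,X_2,\ldots$ be i.i.d. random variables with $a=\mathsf{E}X_1\neq 0$ and finite variance $\sigma^2=\mathsf{D}X_1$. Let $\lambda>0$ and let $N(\lambda)$ be a random variable with the Poisson distribution with parameter $\lambda$, independent of $X_1,X_2,\ldots$ (the empty sum $\sum_{j=1}^0$ is defined to be $0$). Let $1\le s\le 2$ and write $s=m+\alpha$ with $m$ a nonnegative integer and $0<\alpha\le 1$. Then $$ \zeta_s\bigg(\frac{1}{a\lambda}\sum_{j=1}^{N(\lambda)}X_j,\;1\bigg)\le\frac{\Gamma(1+\alpha)}{\Gamma(1+s)}\Big(\frac{a^2+\sigma^2}{\lambda a^2}\Big)^{s/2}. $$
   Context: For $s>0$ write uniquely $s=m+\alpha$ with $m$ a nonnegative integer and $0<\alpha\le 1$. $\mathcal{F}_s$ denotes the set of all real-valued bounded functions $f$ on $\mathbb{R}$ that are $m$ times differentiable and satisfy $|f^{(m)}(x)-f^{(m)}(y)|\le|x-y|^{\alpha}$ for all $x,y$. The Zolotarev metric is $\zeta_s(X,Y)=\sup\{|\mathsf{E}(f(X)-f(Y))|: f\in\mathcal{F}_s\}$; here the second argument $1$ denotes the random variable identically equal to $1$. *)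

theory Defs
  imports "HOL-Probability.Probability"
begin

text \<open>Decomposition s = m + alpha with m a nonnegative integer and 0 < alpha \<le> 1.\<close>
definition zol_m :: "real \<Rightarrow> nat" where
  "zol_m s = nat (\<lceil>s\<rceil> - 1)"

definition zol_alpha :: "real \<Rightarrow> real" where
  "zol_alpha s = s - real (zol_m s)"

definition zol_class :: "real \<Rightarrow> (real \<Rightarrow> real) set" where
  "zol_class s = {f. bounded (range f) \<and>
      (\<forall>k < zol_m s. \<forall>x. ((deriv ^^ k) f) differentiable (at x)) \<and>
      (\<forall>x y. \<bar>(deriv ^^ zol_m s) f x - (deriv ^^ zol_m s) f y\<bar> \<le> \<bar>x - y\<bar> powr zol_alpha s)}"

text \<open>Zolotarev metric between two real random variables on the same probability
  space M (values in the extended reals, so that an unbounded supremum is +\<infinity>).\<close>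
definition zolotarev :: "real \<Rightarrow> 'a measure \<Rightarrow> ('a \<Rightarrow> real) \<Rightarrow> ('a \<Rightarrow> real) \<Rightarrow> ereal" where
  "zolotarev s M X Y = (SUP f \<in> zol_class s.
      ereal \<bar>(\<integral>\<omega>. f (X \<omega>) \<partial>M) - (\<integral>\<omega>. f (Y \<omega>) \<partial>M)\<bar>)"

end

theory Submission
  imports Defs
begin

text \<open>
  Write S for the normalized random sum and V = E (S - 1)^2. For f in F_s with 1 \<le> s \<le> 2, a
  first-order Taylor expansion at 1 whose derivative is Hoelder of order alpha = s - 1 (or, for
  s = 1, the Lipschitz bound itself) gives
  |f x - f 1 - d (x - 1)| \<le> Gamma(1 + alpha) / Gamma(1 + s) |x - 1|^s.
  Since E S = 1 the linear term has mean zero, so |E f(S) - f(1)| is at most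
  Gamma(1 + alpha) / Gamma(1 + s) E |S - 1|^s, and E |S - 1|^s \<le> V^(s/2) by Lyapunov's inequality.
  Conditioning on N = k, the partial sums have second moment k E X^2 + (k^2 - k) a^2, and averaging
  against the Poisson weights yields V = (a^2 + sigma^2) / (lam a^2).
\<close>

lemma taylor_remainder_holder_right:
  fixes f :: "real \<Rightarrow> real"
  assumes dif: "\<And>x. f differentiable (at x)"
    and hol: "\<And>x y. \<bar>deriv f x - deriv f y\<bar> \<le> \<bar>x - y\<bar> powr a"
    and a: "0 < a" and yx: "y < x" and c: "\<bar>c\<bar> = 1"
  shows "c * (f x - f y - deriv f y * (x - y)) \<le> (x - y) powr (1 + a) / (1 + a)"
proof -
  define \<psi> where "\<psi> t = c * (f t - f y - deriv f y * (t - y)) - (t - y) powr (1 + a) / (1 + a)" for t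
  have Df: "DERIV f t :> deriv f t" for t
    using dif by (simp add: DERIV_deriv_iff_real_differentiable)
  have "continuous_on {y..x} f"
    by (meson Df DERIV_continuous continuous_at_imp_continuous_on)
  then have cont: "continuous_on {y..x} \<psi>"
    unfolding \<psi>_def using a by (intro continuous_intros continuous_on_powr') auto
  have D\<psi>: "DERIV \<psi> t :> c * (deriv f t - deriv f y) - (t - y) powr a" if "y < t" for t
  proof -
    have "DERIV (\<lambda>t. (t - y) powr (1 + a) / (1 + a)) t :> (1 + a) * (t - y) powr a / (1 + a)"
      using that by (auto intro!: derivative_eq_intros)
    then have P: "DERIV (\<lambda>t. (t - y) powr (1 + a) / (1 + a)) t :> (t - y) powr a"
      using a by simp
    show ?thesis
      unfolding \<psi>_def by (rule derivative_eq_intros P Df | simp)+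
  qed
  obtain l z where z: "y < z" "z < x" "DERIV \<psi> z :> l" "\<psi> x - \<psi> y = (x - y) * l"
    using MVT[OF yx cont] D\<psi> by (meson real_differentiable_def)
  have "l = c * (deriv f z - deriv f y) - (z - y) powr a"
    using DERIV_unique[OF z(3) D\<psi>[OF z(1)]] .
  moreover have "c * (deriv f z - deriv f y) \<le> \<bar>deriv f z - deriv f y\<bar>"
    using c by (cases "c \<ge> 0") (auto simp: abs_if)
  moreover have "\<bar>deriv f z - deriv f y\<bar> \<le> (z - y) powr a"
    using hol[of z y] z by simp
  ultimately have "\<psi> x \<le> \<psi> y"
    using z(4) yx mult_nonneg_nonpos[of "x - y" l] by simp
  moreover have "\<psi> y = 0"
    unfolding \<psi>_def using a by simp
  ultimately show ?thesis
    unfolding \<psi>_def by simp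
qed

lemma taylor_remainder_holder:
  fixes f :: "real \<Rightarrow> real"
  assumes dif: "\<And>x. f differentiable (at x)"
    and hol: "\<And>x y. \<bar>deriv f x - deriv f y\<bar> \<le> \<bar>x - y\<bar> powr a"
    and a: "0 < a"
  shows "\<bar>f x - f y - deriv f y * (x - y)\<bar> \<le> \<bar>x - y\<bar> powr (1 + a) / (1 + a)"
proof -
  consider "y < x" | "x = y" | "x < y"
    by linarith
  then show ?thesis
  proof cases
    case 1
    then show ?thesis
      using taylor_remainder_holder_right[OF dif hol a 1, of 1]
        taylor_remainder_holder_right[OF dif hol a 1, of "-1"]
      by (simp add: abs_le_iff)
  next
    case 2
    then show ?thesis
      using a by simp
  next
    case 3
    define g where "g t = f (- t)" for t
    have Df: "DERIV f t :> deriv f t" for t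
      using dif by (simp add: DERIV_deriv_iff_real_differentiable)
    have Dg: "DERIV g t :> - deriv f (- t)" for t
      unfolding g_def using DERIV_chain2[OF Df DERIV_minus[OF DERIV_ident]] by simp
    then have dg: "deriv g t = - deriv f (- t)" for t
      by (rule DERIV_imp_deriv)
    have difg: "g differentiable (at t)" for t
      using Dg real_differentiable_def by blast
    have holg: "\<bar>deriv g u - deriv g v\<bar> \<le> \<bar>u - v\<bar> powr a" for u v
      using hol[of "- u" "- v"] by (simp add: dg abs_minus_commute)
    have "- y < - x"
      using 3 by simp
    from taylor_remainder_holder_right[OF difg holg a this, of 1]
      taylor_remainder_holder_right[OF difg holg a this, of "-1"]
    show ?thesis
      using 3 by (simp add: abs_le_iff g_def dg algebra_simps)
  qed
qed

lemma zol_m_alpha_le_1: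
  assumes "0 < s" "s \<le> 1"
  shows "zol_m s = 0" "zol_alpha s = s"
proof -
  have "\<lceil>s\<rceil> = 1"
    using assms by (simp add: ceiling_eq_iff)
  then show "zol_m s = 0" "zol_alpha s = s"
    by (simp_all add: zol_m_def zol_alpha_def)
qed

lemma zol_m_alpha_le_2:
  assumes "1 < s" "s \<le> 2"
  shows "zol_m s = 1" "zol_alpha s = s - 1"
proof -
  have "\<lceil>s\<rceil> = 2"
    using assms by (simp add: ceiling_eq_iff)
  then show "zol_m s = 1" "zol_alpha s = s - 1"
    by (simp_all add: zol_m_def zol_alpha_def)
qed

lemma zol_alpha_pos:
  assumes "0 < s"
  shows "0 < zol_alpha s"
proof -
  have "real_of_int \<lceil>s\<rceil> - 1 < s"
    by linarith
  moreover have "0 \<le> \<lceil>s\<rceil> - 1"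
    using assms by linarith
  ultimately show ?thesis
    by (simp add: zol_alpha_def zol_m_def)
qed

lemma zol_class_continuous:
  assumes f: "f \<in> zol_class s" and s: "0 < s"
  shows "continuous_on UNIV f"
proof (cases "zol_m s = 0")
  case True
  have hol: "\<bar>f y - f x\<bar> \<le> \<bar>y - x\<bar> powr zol_alpha s" for x y
    using f True by (simp add: zol_class_def)
  have "isCont f x" for x
  proof -
    have "((\<lambda>y. \<bar>y - x\<bar> powr zol_alpha s) \<longlongrightarrow> \<bar>x - x\<bar> powr zol_alpha s) (at x)"
      using zol_alpha_pos[OF s]
      by (intro tendsto_powr' tendsto_rabs tendsto_diff tendsto_ident_at tendsto_const) auto
    then have "((\<lambda>y. \<bar>y - x\<bar> powr zol_alpha s) \<longlongrightarrow> 0) (at x)"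
      using zol_alpha_pos[OF s] by simp
    moreover have "\<forall>\<^sub>F y in at x. norm (f y - f x) \<le> \<bar>y - x\<bar> powr zol_alpha s"
      using hol by (simp add: always_eventually)
    ultimately have "((\<lambda>y. f y - f x) \<longlongrightarrow> 0) (at x)"
      by (rule Lim_null_comparison[rotated])
    then show ?thesis
      unfolding isCont_def by (rule LIM_zero_cancel)
  qed
  then show ?thesis
    by (simp add: continuous_at_imp_continuous_on)
next
  case False
  then have "f differentiable (at x)" for x
    using f by (auto simp: zol_class_def)
  then show ?thesis
    by (meson continuous_at_imp_continuous_on differentiable_imp_continuous_within)
qed

lemma zol_class_linear_approx:
  assumes f: "f \<in> zol_class s" and s: "1 \<le> s" "s \<le> 2"
  obtains d where
    "\<And>x. \<bar>f x - f b - d * (x - b)\<bar> \<le> Gamma (1 + zol_alpha s) / Gamma (1 + s) * \<bar>x - b\<bar> powr s"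
proof (cases "s = 1")
  case True
  then have "zol_m s = 0" "zol_alpha s = 1"
    using zol_m_alpha_le_1[of s] by simp_all
  then have "\<bar>f x - f b\<bar> \<le> \<bar>x - b\<bar>" for x
    using f by (simp add: zol_class_def)
  moreover have "Gamma (1 + zol_alpha s) / Gamma (1 + s) = 1"
    using True \<open>zol_alpha s = 1\<close> by (simp add: Gamma_numeral)
  ultimately show ?thesis
    using True by (intro that[of 0]) simp
next
  case False
  then have s1: "1 < s"
    using s by simp
  note m_alpha = zol_m_alpha_le_2[OF s1 s(2)]
  have dif: "f differentiable (at x)" for x
    using f by (simp add: zol_class_def m_alpha)
  have hol: "\<bar>deriv f x - deriv f y\<bar> \<le> \<bar>x - y\<bar> powr (s - 1)" for x y
    using f by (simp add: zol_class_def m_alpha)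
  have "Gamma (1 + s) = s * Gamma s"
    using s1 Gamma_plus1[of s] by (simp add: add.commute nonpos_Ints_def)
  moreover have "0 < Gamma s"
    using s1 by (intro Gamma_real_pos) simp
  ultimately have "Gamma (1 + zol_alpha s) / Gamma (1 + s) = 1 / s"
    by (simp add: m_alpha)
  then show ?thesis
    using taylor_remainder_holder[OF dif hol, of _ b] s1 by (intro that[of "deriv f b"]) simp
qed

lemma (in prob_space) abs_powr_moment_le_second_moment:
  fixes Y :: "'a \<Rightarrow> real"
  assumes [measurable]: "Y \<in> borel_measurable M"
    and sq: "integrable M (\<lambda>\<omega>. (Y \<omega>)\<^sup>2)" and s: "0 < s" "s \<le> 2"
  shows "integrable M (\<lambda>\<omega>. \<bar>Y \<omega>\<bar> powr s)"
    and "expectation (\<lambda>\<omega>. \<bar>Y \<omega>\<bar> powr s) \<le> expectation (\<lambda>\<omega>. (Y \<omega>)\<^sup>2) powr (s / 2)"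
proof -
  define V where "V = expectation (\<lambda>\<omega>. (Y \<omega>)\<^sup>2)"
  have "0 \<le> V"
    unfolding V_def by simp
  then consider "V = 0" | "0 < V"
    by linarith
  then have "integrable M (\<lambda>\<omega>. \<bar>Y \<omega>\<bar> powr s) \<and> expectation (\<lambda>\<omega>. \<bar>Y \<omega>\<bar> powr s) \<le> V powr (s / 2)"
  proof cases
    case 1
    then have "AE \<omega> in M. (Y \<omega>)\<^sup>2 = 0"
      using integral_nonneg_eq_0_iff_AE[OF sq] by (simp add: V_def)
    then have zero: "AE \<omega> in M. \<bar>Y \<omega>\<bar> powr s = 0"
      by eventually_elim simp
    have "integrable M (\<lambda>\<omega>. \<bar>Y \<omega>\<bar> powr s) \<longleftrightarrow> integrable M (\<lambda>_. 0 :: real)"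
      by (rule integrable_cong_AE[OF _ _ zero]) simp_all
    moreover have "expectation (\<lambda>\<omega>. \<bar>Y \<omega>\<bar> powr s) = expectation (\<lambda>_. 0 :: real)"
      by (rule integral_cong_AE[OF _ _ zero]) simp_all
    ultimately show ?thesis
      using 1 by simp
  next
    case 2
    define p where "p = s / 2"
    have p: "0 < p" "p \<le> 1"
      using s by (auto simp: p_def)
    \<comment> \<open>Young's inequality with weights p and 1 - p bounds |y|^s by an affine function of y^2.\<close>
    have young: "\<bar>y\<bar> powr s \<le> (p * y\<^sup>2 + (1 - p) * V) / V powr (1 - p)" for y
    proof (cases "y = 0")
      case False
      have "y\<^sup>2 = \<bar>y\<bar> powr 2"
        using False by (simp add: powr_numeral)
      then have "(y\<^sup>2) powr p = (\<bar>y\<bar> powr 2) powr p"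
        by simp
      also have "\<dots> = \<bar>y\<bar> powr (2 * p)"
        by (rule powr_powr)
      also have "\<dots> = \<bar>y\<bar> powr s"
        by (simp add: p_def)
      finally have "\<bar>y\<bar> powr s = (y\<^sup>2) powr p" ..
      moreover have "(y\<^sup>2) powr p * V powr (1 - p) \<le> p * y\<^sup>2 + (1 - p) * V"
        using Youngs_inequality_0[of p "1 - p" "y\<^sup>2" V] p False 2 by simp
      ultimately show ?thesis
        using 2 by (simp add: field_simps)
    qed (use p 2 in simp)
    have int_affine: "integrable M (\<lambda>\<omega>. (p * (Y \<omega>)\<^sup>2 + (1 - p) * V) / V powr (1 - p))"
      using sq by auto
    have int: "integrable M (\<lambda>\<omega>. \<bar>Y \<omega>\<bar> powr s)"
      by (rule Bochner_Integration.integrable_bound[OF int_affine])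
        (use young p 2 in \<open>auto intro!: AE_I2 simp: abs_of_nonneg\<close>)
    have "expectation (\<lambda>\<omega>. \<bar>Y \<omega>\<bar> powr s)
        \<le> expectation (\<lambda>\<omega>. (p * (Y \<omega>)\<^sup>2 + (1 - p) * V) / V powr (1 - p))"
      by (rule integral_mono[OF int int_affine young])
    also have "\<dots> = (p * V + (1 - p) * V) / V powr (1 - p)"
      using sq by (simp add: V_def prob_space)
    also have "\<dots> = V powr p"
      using 2 by (simp add: powr_diff field_simps)
    finally show ?thesis
      using int by (simp add: p_def)
  qed
  then show "integrable M (\<lambda>\<omega>. \<bar>Y \<omega>\<bar> powr s)"
    and "expectation (\<lambda>\<omega>. \<bar>Y \<omega>\<bar> powr s) \<le> expectation (\<lambda>\<omega>. (Y \<omega>)\<^sup>2) powr (s / 2)"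
    by (simp_all add: V_def)
qed

lemma (in prob_space) zolotarev_const_le_second_moment:
  fixes S :: "'a \<Rightarrow> real"
  assumes [measurable]: "S \<in> borel_measurable M"
    and sq: "integrable M (\<lambda>\<omega>. (S \<omega> - b)\<^sup>2)" and mean: "expectation S = b"
    and s: "1 \<le> s" "s \<le> 2"
  shows "zolotarev s M S (\<lambda>_. b)
    \<le> ereal (Gamma (1 + zol_alpha s) / Gamma (1 + s) * expectation (\<lambda>\<omega>. (S \<omega> - b)\<^sup>2) powr (s / 2))"
  unfolding zolotarev_def
proof (rule SUP_least)
  fix f
  assume f: "f \<in> zol_class s"
  define C where "C = Gamma (1 + zol_alpha s) / Gamma (1 + s)"
  obtain d where d: "\<And>x. \<bar>f x - f b - d * (x - b)\<bar> \<le> C * \<bar>x - b\<bar> powr s"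
    using zol_class_linear_approx[OF f s] unfolding C_def by blast
  have "0 < zol_alpha s"
    using s by (intro zol_alpha_pos) simp
  then have "0 \<le> C"
    using s unfolding C_def by (intro divide_nonneg_nonneg less_imp_le Gamma_real_pos) simp_all
  have [measurable]: "f \<in> borel_measurable borel"
    using zol_class_continuous[OF f] s by (intro borel_measurable_continuous_onI) simp
  obtain B where "\<And>x. \<bar>f x\<bar> \<le> B"
    using f unfolding zol_class_def bounded_iff by auto
  then have int_f: "integrable M (\<lambda>\<omega>. f (S \<omega>))"
    by (intro integrable_const_bound[where B = B]) auto
  have int_S: "integrable M (\<lambda>\<omega>. S \<omega> - b)"
    by (rule square_integrable_imp_integrable[OF _ sq]) simp
  have "integrable M S"
    using Bochner_Integration.integrable_add[OF int_S integrable_const[of b]] by simp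
  then have mean0: "expectation (\<lambda>\<omega>. S \<omega> - b) = 0"
    using mean by (simp add: prob_space)
  note moment = abs_powr_moment_le_second_moment[of "\<lambda>\<omega>. S \<omega> - b", OF _ sq, of s]
  have "\<bar>expectation (\<lambda>\<omega>. f (S \<omega>)) - expectation (\<lambda>\<omega>. f b)\<bar>
      = \<bar>expectation (\<lambda>\<omega>. f (S \<omega>) - f b - d * (S \<omega> - b))\<bar>"
    using int_f int_S mean0 by (simp add: prob_space)
  also have "\<dots> \<le> expectation (\<lambda>\<omega>. \<bar>f (S \<omega>) - f b - d * (S \<omega> - b)\<bar>)"
    by (rule integral_abs_bound)
  also have "\<dots> \<le> expectation (\<lambda>\<omega>. C * \<bar>S \<omega> - b\<bar> powr s)"
    using int_f int_S moment(1) s by (intro integral_mono d) auto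
  also have "\<dots> \<le> C * expectation (\<lambda>\<omega>. (S \<omega> - b)\<^sup>2) powr (s / 2)"
    using moment(2) s \<open>0 \<le> C\<close> by (simp add: mult_left_mono)
  finally show "ereal \<bar>expectation (\<lambda>\<omega>. f (S \<omega>)) - expectation (\<lambda>\<omega>. f b)\<bar>
      \<le> ereal (C * expectation (\<lambda>\<omega>. (S \<omega> - b)\<^sup>2) powr (s / 2))"
    by simp
qed

lemma poisson_moment_sums:
  fixes lam :: real
  shows "(\<lambda>k. exp (- lam) * lam ^ k / fact k) sums 1"
    and "(\<lambda>k. real k * (exp (- lam) * lam ^ k / fact k)) sums lam"
    and "(\<lambda>k. (real k)\<^sup>2 * (exp (- lam) * lam ^ k / fact k)) sums (lam\<^sup>2 + lam)"
proof -
  have exp_series: "(\<lambda>k. lam ^ k / fact k) sums exp lam"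
    using exp_converges[of lam] by (simp add: divide_inverse mult.commute)
  have first_moment: "(\<lambda>k. real k * lam ^ k / fact k) sums (lam * exp lam)"
  proof -
    have "(\<lambda>n. real (Suc n) * lam ^ Suc n / fact (Suc n)) = (\<lambda>n. lam * (lam ^ n / fact n))"
      by (auto simp: fun_eq_iff field_simps simp del: of_nat_Suc)
    then have "(\<lambda>n. real (Suc n) * lam ^ Suc n / fact (Suc n)) sums (lam * exp lam)"
      using sums_mult[OF exp_series, of lam] by simp
    then show ?thesis
      by (subst (asm) sums_Suc_iff) simp
  qed
  have second_moment: "(\<lambda>k. (real k)\<^sup>2 * lam ^ k / fact k) sums (lam * (lam * exp lam + exp lam))"
  proof -
    have "(\<lambda>n. (real (Suc n))\<^sup>2 * lam ^ Suc n / fact (Suc n))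
        = (\<lambda>n. lam * (real (Suc n) * lam ^ n / fact n))"
      by (auto simp: fun_eq_iff field_simps power2_eq_square simp del: of_nat_Suc)
    also have "\<dots> = (\<lambda>n. lam * (real n * lam ^ n / fact n + lam ^ n / fact n))"
      by (auto simp: fun_eq_iff field_simps)
    finally have "(\<lambda>n. (real (Suc n))\<^sup>2 * lam ^ Suc n / fact (Suc n)) sums (lam * (lam * exp lam + exp lam))"
      using sums_mult[OF sums_add[OF first_moment exp_series], of lam] by simp
    then show ?thesis
      by (subst (asm) sums_Suc_iff) simp
  qed
  show "(\<lambda>k. exp (- lam) * lam ^ k / fact k) sums 1"
    using sums_mult[OF exp_series, of "exp (- lam)"] by (simp add: exp_minus field_simps)
  show "(\<lambda>k. real k * (exp (- lam) * lam ^ k / fact k)) sums lam"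
    using sums_mult[OF first_moment, of "exp (- lam)"] by (simp add: exp_minus field_simps)
  show "(\<lambda>k. (real k)\<^sup>2 * (exp (- lam) * lam ^ k / fact k)) sums (lam\<^sup>2 + lam)"
  proof -
    have "exp (- lam) * (lam * (lam * exp lam + exp lam)) = lam\<^sup>2 + lam"
      by (simp add: exp_minus field_simps power2_eq_square)
    then show ?thesis
      using sums_mult[OF second_moment, of "exp (- lam)"] by (simp add: ac_simps)
  qed
qed

locale compound_poisson = prob_space M for M :: "'a measure" +
  fixes X :: "nat \<Rightarrow> 'a \<Rightarrow> real" and N :: "'a \<Rightarrow> nat" and lam :: real
  assumes indep: "indep_vars (\<lambda>_. borel) (\<lambda>i. case i of None \<Rightarrow> (\<lambda>\<omega>. real (N \<omega>)) | Some j \<Rightarrow> X j) UNIV"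
    and ident: "\<And>i. distr M borel (X i) = distr M borel (X 0)"
    and sq_int: "integrable M (\<lambda>\<omega>. (X 0 \<omega>)\<^sup>2)"
    and poisson: "\<And>k. measure M {\<omega> \<in> space M. N \<omega> = k} = exp (- lam) * lam ^ k / fact k"
begin

lemma X_measurable [measurable]: "X j \<in> borel_measurable M"
  using indep unfolding indep_vars_def by (metis (no_types, lifting) UNIV_I option.simps(5))

lemma N_measurable [measurable]: "(\<lambda>\<omega>. real (N \<omega>)) \<in> borel_measurable M"
  using indep unfolding indep_vars_def by (metis (no_types, lifting) UNIV_I option.simps(4))

lemma N_eq_sets [measurable]: "{\<omega> \<in> space M. N \<omega> = k} \<in> sets M"
proof -
  have "{\<omega> \<in> space M. real (N \<omega>) = real k} \<in> sets M"
    by measurable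
  then show ?thesis
    by simp
qed

lemma X_comp_same_distribution:
  fixes g :: "real \<Rightarrow> real"
  assumes [measurable]: "g \<in> borel_measurable borel"
  shows "integrable M (\<lambda>\<omega>. g (X j \<omega>)) \<longleftrightarrow> integrable M (\<lambda>\<omega>. g (X 0 \<omega>))"
    and "expectation (\<lambda>\<omega>. g (X j \<omega>)) = expectation (\<lambda>\<omega>. g (X 0 \<omega>))"
  using integrable_distr_eq[of "X j" M borel g] integrable_distr_eq[of "X 0" M borel g]
    integral_distr[of "X j" M borel g] integral_distr[of "X 0" M borel g] ident[of j]
  by simp_all

lemma X_moments:
  shows "integrable M (X j)" and "integrable M (\<lambda>\<omega>. (X j \<omega>)\<^sup>2)"
    and "expectation (X j) = expectation (X 0)"
    and "expectation (\<lambda>\<omega>. (X j \<omega>)\<^sup>2) = expectation (\<lambda>\<omega>. (X 0 \<omega>)\<^sup>2)"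
  using X_comp_same_distribution[of "\<lambda>x. x" j] X_comp_same_distribution[of "\<lambda>x. x\<^sup>2" j]
    square_integrable_imp_integrable[OF X_measurable sq_int]
  by (simp_all add: sq_int)

lemma X_mult_moments:
  assumes "i \<noteq> j"
  shows "integrable M (\<lambda>\<omega>. X i \<omega> * X j \<omega>)"
    and "expectation (\<lambda>\<omega>. X i \<omega> * X j \<omega>) = (expectation (X 0))\<^sup>2"
proof -
  define Z where "Z = (\<lambda>i. case i of None \<Rightarrow> (\<lambda>\<omega>. real (N \<omega>)) | Some j \<Rightarrow> X j)"
  have indep_ij: "indep_vars (\<lambda>_. borel) Z {Some i, Some j}"
    using indep_vars_subset[OF indep] by (simp add: Z_def)
  have int: "\<And>l. l \<in> {Some i, Some j} \<Longrightarrow> integrable M (Z l)"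
    using X_moments by (auto simp: Z_def)
  have prod: "(\<lambda>\<omega>. \<Prod>l\<in>{Some i, Some j}. Z l \<omega>) = (\<lambda>\<omega>. X i \<omega> * X j \<omega>)"
    using assms by (simp add: Z_def)
  show "integrable M (\<lambda>\<omega>. X i \<omega> * X j \<omega>)"
    using indep_vars_integrable[OF _ indep_ij int] prod by simp
  have "expectation (\<lambda>\<omega>. X i \<omega> * X j \<omega>) = (\<Prod>l\<in>{Some i, Some j}. expectation (Z l))"
    using indep_vars_lebesgue_integral[OF _ indep_ij int] prod by simp
  also have "\<dots> = (expectation (X 0))\<^sup>2"
    using assms X_moments(3)[of i] X_moments(3)[of j] by (simp add: Z_def power2_eq_square)
  finally show "expectation (\<lambda>\<omega>. X i \<omega> * X j \<omega>) = (expectation (X 0))\<^sup>2" .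
qed

lemma partial_sum_moments:
  shows "integrable M (\<lambda>\<omega>. \<Sum>j<k. X j \<omega>)"
    and "expectation (\<lambda>\<omega>. \<Sum>j<k. X j \<omega>) = real k * expectation (X 0)"
    and "integrable M (\<lambda>\<omega>. (\<Sum>j<k. X j \<omega>)\<^sup>2)"
    and "expectation (\<lambda>\<omega>. (\<Sum>j<k. X j \<omega>)\<^sup>2)
      = real k * expectation (\<lambda>\<omega>. (X 0 \<omega>)\<^sup>2) + (real k * real k - real k) * (expectation (X 0))\<^sup>2"
proof -
  define a where "a = expectation (X 0)"
  define m2 where "m2 = expectation (\<lambda>\<omega>. (X 0 \<omega>)\<^sup>2)"
  show "integrable M (\<lambda>\<omega>. \<Sum>j<k. X j \<omega>)"
    using X_moments by auto
  show "expectation (\<lambda>\<omega>. \<Sum>j<k. X j \<omega>) = real k * expectation (X 0)"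
    using X_moments(1,3) by (simp add: Bochner_Integration.integral_sum sum.cong[OF refl X_moments(3)])
  have square: "(\<lambda>\<omega>. (\<Sum>j<k. X j \<omega>)\<^sup>2) = (\<lambda>\<omega>. \<Sum>i<k. \<Sum>j<k. X i \<omega> * X j \<omega>)"
    by (simp add: power2_eq_square sum_product)
  have int_ij: "integrable M (\<lambda>\<omega>. X i \<omega> * X j \<omega>)" for i j
    using X_mult_moments(1)[of i j] X_moments(2)[of i] by (cases "i = j") (auto simp: power2_eq_square)
  have E_ij: "expectation (\<lambda>\<omega>. X i \<omega> * X j \<omega>) = a\<^sup>2 + (if i = j then m2 - a\<^sup>2 else 0)" for i j
    using X_mult_moments(2)[of i j] X_moments(4)[of i]
    by (cases "i = j") (auto simp: power2_eq_square a_def m2_def)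
  show "integrable M (\<lambda>\<omega>. (\<Sum>j<k. X j \<omega>)\<^sup>2)"
    unfolding square using int_ij by auto
  have "expectation (\<lambda>\<omega>. (\<Sum>j<k. X j \<omega>)\<^sup>2) = (\<Sum>i<k. \<Sum>j<k. expectation (\<lambda>\<omega>. X i \<omega> * X j \<omega>))"
    unfolding square using int_ij by (simp add: Bochner_Integration.integral_sum)
  also have "\<dots> = (\<Sum>i<k. \<Sum>j<k. a\<^sup>2 + (if i = j then m2 - a\<^sup>2 else 0))"
    by (simp only: E_ij)
  also have "\<dots> = real k * m2 + (real k * real k - real k) * a\<^sup>2"
    by (simp add: sum.distrib algebra_simps)
  finally show "expectation (\<lambda>\<omega>. (\<Sum>j<k. X j \<omega>)\<^sup>2)
      = real k * expectation (\<lambda>\<omega>. (X 0 \<omega>)\<^sup>2) + (real k * real k - real k) * (expectation (X 0))\<^sup>2"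
    by (simp add: a_def m2_def)
qed

lemma indep_N_partial_sum: "indep_var borel (\<lambda>\<omega>. real (N \<omega>)) borel (\<lambda>\<omega>. \<Sum>j<k. X j \<omega>)"
proof -
  define Z where "Z = (\<lambda>i. case i of None \<Rightarrow> (\<lambda>\<omega>. real (N \<omega>)) | Some j \<Rightarrow> X j)"
  have "indep_var (PiM {None} (\<lambda>_. borel)) (\<lambda>\<omega>. restrict (\<lambda>i. Z i \<omega>) {None})
      (PiM (Some ` {..<k}) (\<lambda>_. borel)) (\<lambda>\<omega>. restrict (\<lambda>i. Z i \<omega>) (Some ` {..<k}))"
    using indep by (intro indep_var_restrict) (auto simp: Z_def)
  moreover have "(\<lambda>v. v None) \<in> borel_measurable (PiM {None} (\<lambda>_. borel))"
    by (rule measurable_component_singleton) simp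
  moreover have "(\<lambda>v. v (Some j)) \<in> borel_measurable (PiM (Some ` {..<k}) (\<lambda>_. borel :: real measure))"
    if "j < k" for j
    using that by (intro measurable_component_singleton) simp
  then have "(\<lambda>v. \<Sum>j<k. v (Some j)) \<in> borel_measurable (PiM (Some ` {..<k}) (\<lambda>_. borel :: real measure))"
    by (intro borel_measurable_sum) simp
  ultimately have "indep_var borel ((\<lambda>v. v None) \<circ> (\<lambda>\<omega>. restrict (\<lambda>i. Z i \<omega>) {None}))
      borel ((\<lambda>v. \<Sum>j<k. v (Some j)) \<circ> (\<lambda>\<omega>. restrict (\<lambda>i. Z i \<omega>) (Some ` {..<k})))"
    by (rule indep_var_compose)
  then show ?thesis
    by (simp add: o_def Z_def)
qed

lemma integral_indicator_N_mult:
  fixes g :: "real \<Rightarrow> real"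
  assumes [measurable]: "g \<in> borel_measurable borel"
    and int: "integrable M (\<lambda>\<omega>. g (\<Sum>j<k. X j \<omega>))"
  shows "integrable M (\<lambda>\<omega>. indicator {\<omega>. N \<omega> = k} \<omega> * g (\<Sum>j<k. X j \<omega>))"
    and "expectation (\<lambda>\<omega>. indicator {\<omega>. N \<omega> = k} \<omega> * g (\<Sum>j<k. X j \<omega>))
      = exp (- lam) * lam ^ k / fact k * expectation (\<lambda>\<omega>. g (\<Sum>j<k. X j \<omega>))"
proof -
  have "indep_var borel ((\<lambda>n. indicator {real k} n :: real) \<circ> (\<lambda>\<omega>. real (N \<omega>)))
      borel (g \<circ> (\<lambda>\<omega>. \<Sum>j<k. X j \<omega>))"
    by (rule indep_var_compose[OF indep_N_partial_sum]) simp_all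
  moreover have "(\<lambda>n. indicator {real k} n :: real) \<circ> (\<lambda>\<omega>. real (N \<omega>)) = indicator {\<omega>. N \<omega> = k}"
    by (auto simp: fun_eq_iff indicator_def)
  ultimately have indep_k: "indep_var borel (indicator {\<omega>. N \<omega> = k} :: 'a \<Rightarrow> real)
      borel (\<lambda>\<omega>. g (\<Sum>j<k. X j \<omega>))"
    by (simp add: o_def)
  have "{\<omega>. N \<omega> = k} \<inter> space M = {\<omega> \<in> space M. N \<omega> = k}"
    by blast
  then have int_ind: "integrable M (indicator {\<omega>. N \<omega> = k} :: 'a \<Rightarrow> real)"
    using N_eq_sets[of k] by (simp add: integrable_indicator_iff less_top[symmetric])
  have "expectation (indicator {\<omega>. N \<omega> = k} :: 'a \<Rightarrow> real)
      = expectation (indicator {\<omega> \<in> space M. N \<omega> = k} :: 'a \<Rightarrow> real)"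
    by (rule Bochner_Integration.integral_cong) (simp_all add: indicator_def)
  also have "\<dots> = exp (- lam) * lam ^ k / fact k"
    using poisson[of k] by simp
  finally have "expectation (indicator {\<omega>. N \<omega> = k} :: 'a \<Rightarrow> real) = exp (- lam) * lam ^ k / fact k" .
  then show "integrable M (\<lambda>\<omega>. indicator {\<omega>. N \<omega> = k} \<omega> * g (\<Sum>j<k. X j \<omega>))"
    and "expectation (\<lambda>\<omega>. indicator {\<omega>. N \<omega> = k} \<omega> * g (\<Sum>j<k. X j \<omega>))
      = exp (- lam) * lam ^ k / fact k * expectation (\<lambda>\<omega>. g (\<Sum>j<k. X j \<omega>))"
    using indep_var_integrable[OF indep_k int_ind int] indep_var_lebesgue_integral[OF indep_k int_ind int]
    by simp_all
qed

lemma random_sum_sums: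
  fixes g :: "real \<Rightarrow> real"
  assumes [measurable]: "g \<in> borel_measurable borel"
    and int: "\<And>k. integrable M (\<lambda>\<omega>. g (\<Sum>j<k. X j \<omega>))"
    and summable: "summable (\<lambda>k. exp (- lam) * lam ^ k / fact k * expectation (\<lambda>\<omega>. \<bar>g (\<Sum>j<k. X j \<omega>)\<bar>))"
  shows "integrable M (\<lambda>\<omega>. g (\<Sum>j<N \<omega>. X j \<omega>))"
    and "(\<lambda>k. exp (- lam) * lam ^ k / fact k * expectation (\<lambda>\<omega>. g (\<Sum>j<k. X j \<omega>)))
      sums expectation (\<lambda>\<omega>. g (\<Sum>j<N \<omega>. X j \<omega>))"
proof -
  define f where "f k \<omega> = indicator {\<omega>. N \<omega> = k} \<omega> * g (\<Sum>j<k. X j \<omega>)" for k \<omega>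
  have int_f: "integrable M (f k)" for k
    unfolding f_def by (rule integral_indicator_N_mult(1)[OF _ int]) simp
  have norm_f: "(\<lambda>\<omega>. norm (f k \<omega>)) = (\<lambda>\<omega>. indicator {\<omega>. N \<omega> = k} \<omega> * \<bar>g (\<Sum>j<k. X j \<omega>)\<bar>)" for k
    by (simp add: fun_eq_iff f_def abs_mult indicator_def)
  have summable_norm: "summable (\<lambda>k. expectation (\<lambda>\<omega>. norm (f k \<omega>)))"
    unfolding norm_f using summable by (subst integral_indicator_N_mult(2)) (auto intro: int)
  have f_zero: "f k \<omega> = 0" if "k \<notin> {N \<omega>}" for k \<omega>
    using that by (simp add: f_def)
  then have AE_summable: "AE \<omega> in M. summable (\<lambda>k. norm (f k \<omega>))"
    by (intro AE_I2 summable_finite[of "{N \<omega>}" for \<omega>]) auto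
  have suminf_f: "(\<lambda>\<omega>. \<Sum>k. f k \<omega>) = (\<lambda>\<omega>. g (\<Sum>j<N \<omega>. X j \<omega>))"
    using suminf_finite[of "{N \<omega>}" "\<lambda>k. f k \<omega>" for \<omega>] f_zero by (simp add: fun_eq_iff f_def)
  have integral_f: "(\<lambda>k. expectation (f k))
      = (\<lambda>k. exp (- lam) * lam ^ k / fact k * expectation (\<lambda>\<omega>. g (\<Sum>j<k. X j \<omega>)))"
    unfolding f_def using int by (simp add: integral_indicator_N_mult(2) fun_eq_iff)
  show "integrable M (\<lambda>\<omega>. g (\<Sum>j<N \<omega>. X j \<omega>))"
    using integrable_suminf[OF int_f AE_summable summable_norm] unfolding suminf_f .
  show "(\<lambda>k. exp (- lam) * lam ^ k / fact k * expectation (\<lambda>\<omega>. g (\<Sum>j<k. X j \<omega>)))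
      sums expectation (\<lambda>\<omega>. g (\<Sum>j<N \<omega>. X j \<omega>))"
    using sums_integral[OF int_f AE_summable summable_norm] unfolding suminf_f integral_f .
qed

lemma random_sum_moments:
  shows "integrable M (\<lambda>\<omega>. \<Sum>j<N \<omega>. X j \<omega>)"
    and "expectation (\<lambda>\<omega>. \<Sum>j<N \<omega>. X j \<omega>) = lam * expectation (X 0)"
    and "integrable M (\<lambda>\<omega>. (\<Sum>j<N \<omega>. X j \<omega>)\<^sup>2)"
    and "expectation (\<lambda>\<omega>. (\<Sum>j<N \<omega>. X j \<omega>)\<^sup>2)
      = lam * expectation (\<lambda>\<omega>. (X 0 \<omega>)\<^sup>2) + lam\<^sup>2 * (expectation (X 0))\<^sup>2"
proof -
  define a where "a = expectation (X 0)"
  define m2 where "m2 = expectation (\<lambda>\<omega>. (X 0 \<omega>)\<^sup>2)"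
  define p where "p k = exp (- lam) * lam ^ k / fact k" for k :: nat
  note poisson_sums = poisson_moment_sums[of lam, folded p_def]
  have p_nonneg: "0 \<le> p k" for k
    unfolding p_def poisson[symmetric] by (rule measure_nonneg)
  have "(\<lambda>k. m2 * (real k * p k) + a\<^sup>2 * ((real k)\<^sup>2 * p k) - a\<^sup>2 * (real k * p k))
      sums (m2 * lam + a\<^sup>2 * (lam\<^sup>2 + lam) - a\<^sup>2 * lam)"
    by (intro sums_diff sums_add sums_mult poisson_sums)
  also have "m2 * lam + a\<^sup>2 * (lam\<^sup>2 + lam) - a\<^sup>2 * lam = lam * m2 + lam\<^sup>2 * a\<^sup>2"
    by (simp add: algebra_simps)
  also have "(\<lambda>k. m2 * (real k * p k) + a\<^sup>2 * ((real k)\<^sup>2 * p k) - a\<^sup>2 * (real k * p k))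
      = (\<lambda>k. p k * expectation (\<lambda>\<omega>. (\<Sum>j<k. X j \<omega>)\<^sup>2))"
    unfolding partial_sum_moments(4) a_def[symmetric] m2_def[symmetric]
    by (simp add: fun_eq_iff power2_eq_square algebra_simps)
  finally have sums_sq: "(\<lambda>k. p k * expectation (\<lambda>\<omega>. (\<Sum>j<k. X j \<omega>)\<^sup>2))
      sums (lam * m2 + lam\<^sup>2 * a\<^sup>2)" .
  note sq = random_sum_sums[of "\<lambda>x. x\<^sup>2", folded p_def, OF _ partial_sum_moments(3)]
  show "integrable M (\<lambda>\<omega>. (\<Sum>j<N \<omega>. X j \<omega>)\<^sup>2)"
    using sq sums_summable[OF sums_sq] by simp
  show "expectation (\<lambda>\<omega>. (\<Sum>j<N \<omega>. X j \<omega>)\<^sup>2)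
      = lam * expectation (\<lambda>\<omega>. (X 0 \<omega>)\<^sup>2) + lam\<^sup>2 * (expectation (X 0))\<^sup>2"
    using sums_unique2[OF sq(2) sums_sq] sums_summable[OF sums_sq] by (simp add: a_def m2_def)
  have abs_partial_sum: "expectation (\<lambda>\<omega>. \<bar>\<Sum>j<k. X j \<omega>\<bar>) \<le> real k * expectation (\<lambda>\<omega>. \<bar>X 0 \<omega>\<bar>)" for k
  proof -
    have "expectation (\<lambda>\<omega>. \<bar>\<Sum>j<k. X j \<omega>\<bar>) \<le> expectation (\<lambda>\<omega>. \<Sum>j<k. \<bar>X j \<omega>\<bar>)"
      using partial_sum_moments(1) X_moments(1) by (intro integral_mono) (auto intro: sum_abs)
    also have "\<dots> = real k * expectation (\<lambda>\<omega>. \<bar>X 0 \<omega>\<bar>)"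
      using X_moments(1)
      by (simp add: Bochner_Integration.integral_sum sum.cong[OF refl X_comp_same_distribution(2)[of abs]])
    finally show ?thesis .
  qed
  have "summable (\<lambda>k. p k * expectation (\<lambda>\<omega>. \<bar>\<Sum>j<k. X j \<omega>\<bar>))"
  proof (rule summable_comparison_test')
    show "summable (\<lambda>k. expectation (\<lambda>\<omega>. \<bar>X 0 \<omega>\<bar>) * (real k * p k))"
      using sums_summable[OF sums_mult[OF poisson_sums(2)]] .
    show "norm (p k * expectation (\<lambda>\<omega>. \<bar>\<Sum>j<k. X j \<omega>\<bar>))
        \<le> expectation (\<lambda>\<omega>. \<bar>X 0 \<omega>\<bar>) * (real k * p k)" for k
      using mult_left_mono[OF abs_partial_sum p_nonneg] p_nonneg by (simp add: abs_mult algebra_simps)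
  qed
  note lin = random_sum_sums[of "\<lambda>x. x", folded p_def, OF _ partial_sum_moments(1) this]
  show "integrable M (\<lambda>\<omega>. \<Sum>j<N \<omega>. X j \<omega>)"
    using lin(1) by simp
  have "(\<lambda>k. p k * expectation (\<lambda>\<omega>. \<Sum>j<k. X j \<omega>)) sums (a * lam)"
    using sums_mult[OF poisson_sums(2), of a] by (simp add: partial_sum_moments(2) a_def algebra_simps)
  then show "expectation (\<lambda>\<omega>. \<Sum>j<N \<omega>. X j \<omega>) = lam * expectation (X 0)"
    using sums_unique2[OF lin(2)] by (simp add: a_def)
qed

lemma normalized_random_sum_moments:
  assumes a: "expectation (X 0) \<noteq> 0" and lam: "lam \<noteq> 0"
  defines "S \<equiv> \<lambda>\<omega>. 1 / (expectation (X 0) * lam) * (\<Sum>j<N \<omega>. X j \<omega>)"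
  shows "S \<in> borel_measurable M"
    and "integrable M (\<lambda>\<omega>. (S \<omega> - 1)\<^sup>2)"
    and "expectation S = 1"
    and "expectation (\<lambda>\<omega>. (S \<omega> - 1)\<^sup>2)
      = ((expectation (X 0))\<^sup>2 + variance (X 0)) / (lam * (expectation (X 0))\<^sup>2)"
proof -
  define c where "c = 1 / (expectation (X 0) * lam)"
  define T where "T \<omega> = (\<Sum>j<N \<omega>. X j \<omega>)" for \<omega>
  note T = random_sum_moments[folded T_def]
  have S_eq: "S = (\<lambda>\<omega>. c * T \<omega>)"
    by (simp add: S_def c_def T_def fun_eq_iff)
  have square: "(\<lambda>\<omega>. (S \<omega> - 1)\<^sup>2) = (\<lambda>\<omega>. c\<^sup>2 * (T \<omega>)\<^sup>2 - 2 * c * T \<omega> + 1)"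
    by (simp add: S_eq fun_eq_iff power2_eq_square algebra_simps)
  show "S \<in> borel_measurable M"
    using T(1) by (simp add: S_eq)
  show "integrable M (\<lambda>\<omega>. (S \<omega> - 1)\<^sup>2)"
    unfolding square using T(1,3) by simp
  show "expectation S = 1"
    using a lam by (simp add: S_eq T(2) c_def)
  have "variance (X 0) = expectation (\<lambda>\<omega>. (X 0 \<omega>)\<^sup>2) - (expectation (X 0))\<^sup>2"
    using variance_eq X_moments(1,2) by blast
  then show "expectation (\<lambda>\<omega>. (S \<omega> - 1)\<^sup>2)
      = ((expectation (X 0))\<^sup>2 + variance (X 0)) / (lam * (expectation (X 0))\<^sup>2)"
    unfolding square using T a lam by (simp add: prob_space c_def field_simps power2_eq_square)
qed

end

theorem lemma5:
  fixes M :: "'a measure" and X :: "nat \<Rightarrow> 'a \<Rightarrow> real" and N :: "'a \<Rightarrow> nat"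
    and lam s :: real
  assumes "prob_space M"
    and indep: "prob_space.indep_vars M (\<lambda>_. borel)
          (\<lambda>i. case i of None \<Rightarrow> (\<lambda>\<omega>. real (N \<omega>)) | Some j \<Rightarrow> X j) UNIV"
    and ident: "\<And>i. distr M borel (X i) = distr M borel (X 0)"
    and sq_int: "integrable M (\<lambda>\<omega>. (X 0 \<omega>)\<^sup>2)"
    and a_nz: "prob_space.expectation M (X 0) \<noteq> 0"
    and lam_pos: "lam > 0"
    and N_meas: "N \<in> measurable M (count_space UNIV)"
    and poisson: "\<And>k. measure M {\<omega> \<in> space M. N \<omega> = k} = exp (- lam) * lam ^ k / fact k"
    and s_ge: "1 \<le> s" and s_le: "s \<le> 2"
  shows "zolotarev s M
           (\<lambda>\<omega>. (1 / (prob_space.expectation M (X 0) * lam)) * (\<Sum>j<N \<omega>. X j \<omega>))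
           (\<lambda>_. 1)
         \<le> ereal (Gamma (1 + zol_alpha s) / Gamma (1 + s) *
             (((prob_space.expectation M (X 0))\<^sup>2 + prob_space.variance M (X 0))
               / (lam * (prob_space.expectation M (X 0))\<^sup>2)) powr (s / 2))"
proof -
  interpret compound_poisson M X N lam
    using assms by (intro compound_poisson.intro compound_poisson_axioms.intro) simp_all
  note S = normalized_random_sum_moments[OF a_nz less_imp_neq[OF lam_pos, symmetric]]
  show ?thesis
    using zolotarev_const_le_second_moment[OF S(1-3) s_ge s_le] S(4) by simp
qed

end
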